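(* Let $B$ be a connected board (a region) and $S$ a set of sinks of $B$. Then the large tilt graph $G_L(B,S)$ is weakly connected.
   Context: Pixels are unit squares indexed by $\mathbb{Z}^2$. A board $B=(V,E)$ is a finite subgraph of the square grid graph on $\mathbb{Z}^2$; its boundary consists of all pixel sides not shared with a neighbouring pixel joined by an edge of $E$. A set $S\subseteq V$ of pixels are sinks. For a pixel $p$, its row (column) segment is the maximal set of pixels reachable from $p$ using only horizontal (vertical) edges of $E$; $p^\ell,p^r$ are the leftmost/rightmost pixels of its row segment and $p^u,p^d$ the topmost/bottommost pixels of its column segment. The full tilt graph $G_F(B)$ is the directed graph on $V$ with edges $(p,p^x)$ for $x\in\{\ell,r,u,d\}$ with $p^x\neq p$. A corner pixel is a pixel $p$ with $p=p^x=p^y$ for some $x\in\{\ell,r\}$, $y\in\{u,d\}$. The large tilt graph $G_L(B,S)$ is the subgraph of $G_F(B)$ induced by the vertex set consisting of (i) all pixels reachable in $G_F(B)$ from corner pixels, (ii) every sink $s$ and $s^\ell,s^r,s^u,s^d$, (iii) for every reflex corner of the boundary, the leftmost and rightmost pixels of the row segments and the topmost and bottommost pixels of the column segments of the pixels incident to that corner, and (iv) all pixels on the intersection of a row segment and a column segment each containing a pixel included in (i)–(iii). Weakly connected means connected when edge directions are ignored. *)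

theory Defs
  imports Main
begin

text \<open>Pixels are unit squares indexed by integer pairs (x,y); pixel (x,y) is the
square [x,x+1] x [y,y+1]. "Up" means increasing y, "right" increasing x.\<close>

type_synonym pixel = "int \<times> int"

definition grid_adj :: "pixel \<Rightarrow> pixel \<Rightarrow> bool" where
  "grid_adj p q \<longleftrightarrow> \<bar>fst p - fst q\<bar> + \<bar>snd p - snd q\<bar> = 1"

definition board :: "pixel set \<Rightarrow> pixel set set \<Rightarrow> bool" where
  "board V E \<longleftrightarrow> finite V \<and>
     (\<forall>e\<in>E. \<exists>p q. e = {p, q} \<and> p \<in> V \<and> q \<in> V \<and> grid_adj p q)"

definition joined :: "pixel set set \<Rightarrow> pixel \<Rightarrow> pixel \<Rightarrow> bool" where
  "joined E p q \<longleftrightarrow> {p, q} \<in> E"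

definition connected_board :: "pixel set \<Rightarrow> pixel set set \<Rightarrow> bool" where
  "connected_board V E \<longleftrightarrow> board V E \<and> V \<noteq> {} \<and>
     (\<forall>p\<in>V. \<forall>q\<in>V. (p, q) \<in> {(a, b). joined E a b}\<^sup>*)"

definition hor_rel :: "pixel set set \<Rightarrow> (pixel \<times> pixel) set" where
  "hor_rel E = {(p, q). joined E p q \<and> snd p = snd q}"

definition ver_rel :: "pixel set set \<Rightarrow> (pixel \<times> pixel) set" where
  "ver_rel E = {(p, q). joined E p q \<and> fst p = fst q}"

definition row_seg :: "pixel set set \<Rightarrow> pixel \<Rightarrow> pixel set" where
  "row_seg E p = {q. (p, q) \<in> (hor_rel E)\<^sup>*}"

definition col_seg :: "pixel set set \<Rightarrow> pixel \<Rightarrow> pixel set" where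
  "col_seg E p = {q. (p, q) \<in> (ver_rel E)\<^sup>*}"

datatype dir = L | R | U | D

definition tilt :: "pixel set set \<Rightarrow> dir \<Rightarrow> pixel \<Rightarrow> pixel" where
  "tilt E d p = (case d of
      L \<Rightarrow> (THE q. q \<in> row_seg E p \<and> (\<forall>q'\<in>row_seg E p. fst q \<le> fst q'))
    | R \<Rightarrow> (THE q. q \<in> row_seg E p \<and> (\<forall>q'\<in>row_seg E p. fst q' \<le> fst q))
    | U \<Rightarrow> (THE q. q \<in> col_seg E p \<and> (\<forall>q'\<in>col_seg E p. snd q' \<le> snd q))
    | D \<Rightarrow> (THE q. q \<in> col_seg E p \<and> (\<forall>q'\<in>col_seg E p. snd q \<le> snd q')))"

definition full_tilt_graph :: "pixel set \<Rightarrow> pixel set set \<Rightarrow> (pixel \<times> pixel) set" where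
  "full_tilt_graph V E = {(p, tilt E d p) | p d. p \<in> V \<and> tilt E d p \<noteq> p}"

definition corner_pixel :: "pixel set \<Rightarrow> pixel set set \<Rightarrow> pixel \<Rightarrow> bool" where
  "corner_pixel V E p \<longleftrightarrow> p \<in> V \<and>
     (\<exists>x\<in>{L, R}. \<exists>y\<in>{U, D}. tilt E x p = p \<and> tilt E y p = p)"

text \<open>The four pixels around the lattice point (a,b), in cyclic order NE, NW, SW, SE.
Consecutive pixels in this list (cyclically) share a side incident to (a,b).\<close>
definition quadrants :: "int \<times> int \<Rightarrow> pixel list" where
  "quadrants v = [(fst v, snd v), (fst v - 1, snd v), (fst v - 1, snd v - 1), (fst v, snd v - 1)]"

text \<open>A lattice point v is a reflex corner of the boundary if the board, locally at v,
contains three cyclically consecutive quadrant pixels connected through the two sides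
between them (a 270 degree local angle), and the boundary passes through v, i.e. at
least one of the remaining two sides at v is a boundary side.\<close>
definition reflex_corner :: "pixel set set \<Rightarrow> int \<times> int \<Rightarrow> bool" where
  "reflex_corner E v \<longleftrightarrow> (\<exists>i<4. let q = (\<lambda>k. quadrants v ! ((i + k) mod 4)) in
      joined E (q 0) (q 1) \<and> joined E (q 1) (q 2) \<and>
      \<not> (joined E (q 2) (q 3) \<and> joined E (q 3) (q 0)))"

definition incident_pixels :: "pixel set \<Rightarrow> int \<times> int \<Rightarrow> pixel set" where
  "incident_pixels V v = {q \<in> set (quadrants v). q \<in> V}"

definition large_tilt_base :: "pixel set \<Rightarrow> pixel set set \<Rightarrow> pixel set \<Rightarrow> pixel set" where
  "large_tilt_base V E S =
     {p. \<exists>c. corner_pixel V E c \<and> (c, p) \<in> (full_tilt_graph V E)\<^sup>*}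
     \<union> S \<union> {tilt E d s | s d. s \<in> S}
     \<union> {tilt E d q | q d. \<exists>v. reflex_corner E v \<and> q \<in> incident_pixels V v}"

definition large_tilt_vertices :: "pixel set \<Rightarrow> pixel set set \<Rightarrow> pixel set \<Rightarrow> pixel set" where
  "large_tilt_vertices V E S = large_tilt_base V E S \<union>
     {q \<in> V. \<exists>a\<in>large_tilt_base V E S. \<exists>b\<in>large_tilt_base V E S.
        q \<in> row_seg E a \<and> q \<in> col_seg E b}"

definition large_tilt_graph :: "pixel set \<Rightarrow> pixel set set \<Rightarrow> pixel set \<Rightarrow> (pixel \<times> pixel) set" where
  "large_tilt_graph V E S = full_tilt_graph V E \<inter>
     (large_tilt_vertices V E S \<times> large_tilt_vertices V E S)"

definition weakly_connected :: "'a set \<Rightarrow> ('a \<times> 'a) set \<Rightarrow> bool" where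
  "weakly_connected W F \<longleftrightarrow> (\<forall>p\<in>W. \<forall>q\<in>W. (p, q) \<in> (F \<union> F\<inverse>)\<^sup>*)"

end

theory Submission
  imports Defs
begin

(* Send every pixel p to its anchor (p^u)^l. Walking left from a topmost pixel one either
   reaches a corner pixel, or steps onto a pixel joined to the pixel above it, which makes the
   lattice point in between a reflex corner; either way the left end is a vertex of G_L. Every
   vertex w of G_L reaches its anchor along the edges w -> w^u -> (w^u)^l, where w^u is a vertex
   by rule (iv): it lies in the column of w and in the row of its anchor. Vertically joined
   pixels share their anchor. For a horizontal edge between p and its right neighbour consider
   the two pixels above: either neither is joined below (same anchor), or all three edges up
   there are present (move the edge up one row, by induction on the distance to the top), or the
   lattice point between them is a reflex corner, whose incident pixels are vertices of G_L
   linked through their common p^l. Connectivity of the board then links all anchors. *)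

lemma joined_sym: "joined E p q \<longleftrightarrow> joined E q p"
  by (simp add: joined_def insert_commute)

lemma joined_in_board:
  assumes "board V E" "joined E p q"
  shows "p \<in> V" "q \<in> V" "grid_adj p q"
proof -
  obtain a b where "{p, q} = {a, b}" "a \<in> V" "b \<in> V" "grid_adj a b"
    using assms unfolding board_def joined_def by blast
  then show "p \<in> V" "q \<in> V" "grid_adj p q"
    by (auto simp: doubleton_eq_iff grid_adj_def abs_minus_commute)
qed

lemma ex1_key_least:
  fixes g :: "'a \<Rightarrow> 'b::linorder"
  assumes "finite A" "A \<noteq> {}" "inj_on g A"
  shows "\<exists>!q. q \<in> A \<and> (\<forall>q'\<in>A. g q \<le> g q')"
proof -
  have "Min (g ` A) \<in> g ` A"
    using assms(1,2) by simp
  then obtain y where y: "y \<in> A" "g y = Min (g ` A)"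
    by force
  show ?thesis
  proof (rule ex1I[of _ y])
    show "y \<in> A \<and> (\<forall>q'\<in>A. g y \<le> g q')"
      using y assms(1) by simp
    show "q = y" if "q \<in> A \<and> (\<forall>q'\<in>A. g q \<le> g q')" for q
      using that y assms(1,3) by (metis Min_le antisym finite_imageI imageI inj_onD)
  qed
qed

lemma ex1_key_greatest:
  fixes g :: "'a \<Rightarrow> 'b::linorder"
  assumes "finite A" "A \<noteq> {}" "inj_on g A"
  shows "\<exists>!q. q \<in> A \<and> (\<forall>q'\<in>A. g q' \<le> g q)"
proof -
  have "Max (g ` A) \<in> g ` A"
    using assms(1,2) by simp
  then obtain y where y: "y \<in> A" "g y = Max (g ` A)"
    by force
  show ?thesis
  proof (rule ex1I[of _ y])
    show "y \<in> A \<and> (\<forall>q'\<in>A. g q' \<le> g y)"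
      using y assms(1) by simp
    show "q = y" if "q \<in> A \<and> (\<forall>q'\<in>A. g q' \<le> g q)" for q
      using that y assms(1,3) by (metis Max_ge antisym finite_imageI imageI inj_onD)
  qed
qed

lemma sym_hor_rel: "sym (hor_rel E)"
  by (auto simp: hor_rel_def joined_sym intro: symI)

lemma sym_ver_rel: "sym (ver_rel E)"
  by (auto simp: ver_rel_def joined_sym intro: symI)

lemma row_seg_self: "p \<in> row_seg E p"
  by (simp add: row_seg_def)

lemma col_seg_self: "p \<in> col_seg E p"
  by (simp add: col_seg_def)

lemma row_seg_sym: "q \<in> row_seg E p \<Longrightarrow> p \<in> row_seg E q"
  using sym_rtrancl[OF sym_hor_rel] unfolding row_seg_def by (blast dest: symD)

lemma col_seg_sym: "q \<in> col_seg E p \<Longrightarrow> p \<in> col_seg E q"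
  using sym_rtrancl[OF sym_ver_rel] unfolding col_seg_def by (blast dest: symD)

lemma row_seg_eq: "q \<in> row_seg E p \<Longrightarrow> row_seg E q = row_seg E p"
  using row_seg_sym unfolding row_seg_def by (blast intro: rtrancl_trans)

lemma col_seg_eq: "q \<in> col_seg E p \<Longrightarrow> col_seg E q = col_seg E p"
  using col_seg_sym unfolding col_seg_def by (blast intro: rtrancl_trans)

lemma row_seg_joined: "joined E p q \<Longrightarrow> snd p = snd q \<Longrightarrow> q \<in> row_seg E p"
  unfolding row_seg_def hor_rel_def by auto

lemma col_seg_joined: "joined E p q \<Longrightarrow> fst p = fst q \<Longrightarrow> q \<in> col_seg E p"
  unfolding col_seg_def ver_rel_def by auto

lemma tilt_L_row_seg_eq: "q \<in> row_seg E p \<Longrightarrow> tilt E L q = tilt E L p"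
  by (simp add: tilt_def row_seg_eq)

lemma tilt_U_col_seg_eq: "q \<in> col_seg E p \<Longrightarrow> tilt E U q = tilt E U p"
  by (simp add: tilt_def col_seg_eq)

lemma hor_rel_step:
  assumes "board V E" "(p, q) \<in> hor_rel E"
  shows "q \<in> V" "snd q = snd p" "\<bar>fst p - fst q\<bar> = 1"
proof -
  have j: "joined E p q" "snd p = snd q"
    using assms(2) by (auto simp: hor_rel_def)
  then show "q \<in> V" "snd q = snd p" "\<bar>fst p - fst q\<bar> = 1"
    using joined_in_board[OF assms(1) j(1)] by (auto simp: grid_adj_def)
qed

lemma ver_rel_step:
  assumes "board V E" "(p, q) \<in> ver_rel E"
  shows "q \<in> V" "fst q = fst p" "\<bar>snd p - snd q\<bar> = 1"
proof -
  have j: "joined E p q" "fst p = fst q"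
    using assms(2) by (auto simp: ver_rel_def)
  then show "q \<in> V" "fst q = fst p" "\<bar>snd p - snd q\<bar> = 1"
    using joined_in_board[OF assms(1) j(1)] by (auto simp: grid_adj_def)
qed

lemma row_seg_memD:
  assumes "board V E" "q \<in> row_seg E p"
  shows "snd q = snd p \<and> (q = p \<or> q \<in> V)"
proof -
  have "(p, q) \<in> (hor_rel E)\<^sup>*"
    using assms(2) by (simp add: row_seg_def)
  then show ?thesis
    by induction (auto dest: hor_rel_step[OF assms(1)])
qed

lemma col_seg_memD:
  assumes "board V E" "q \<in> col_seg E p"
  shows "fst q = fst p \<and> (q = p \<or> q \<in> V)"
proof -
  have "(p, q) \<in> (ver_rel E)\<^sup>*"
    using assms(2) by (simp add: col_seg_def)
  then show ?thesis
    by induction (auto dest: ver_rel_step[OF assms(1)])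
qed

lemma finite_row_seg: "board V E \<Longrightarrow> finite (row_seg E p)"
  by (rule finite_subset[of _ "insert p V"]) (use row_seg_memD board_def in blast)+

lemma finite_col_seg: "board V E \<Longrightarrow> finite (col_seg E p)"
  by (rule finite_subset[of _ "insert p V"]) (use col_seg_memD board_def in blast)+

lemma inj_on_fst_row_seg: "board V E \<Longrightarrow> inj_on fst (row_seg E p)"
  by (rule inj_onI) (metis prod_eq_iff row_seg_memD)

lemma inj_on_snd_col_seg: "board V E \<Longrightarrow> inj_on snd (col_seg E p)"
  by (rule inj_onI) (metis prod_eq_iff col_seg_memD)

lemma tilt_L:
  assumes "board V E"
  shows "tilt E L p \<in> row_seg E p" "q \<in> row_seg E p \<Longrightarrow> fst (tilt E L p) \<le> fst q"
proof -
  have "\<exists>!q. q \<in> row_seg E p \<and> (\<forall>q'\<in>row_seg E p. fst q \<le> fst q')"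
    by (rule ex1_key_least[OF finite_row_seg[OF assms] _ inj_on_fst_row_seg[OF assms]])
      (use row_seg_self in blast)
  from theI'[OF this] show "tilt E L p \<in> row_seg E p"
    and "q \<in> row_seg E p \<Longrightarrow> fst (tilt E L p) \<le> fst q"
    unfolding tilt_def by auto
qed

lemma tilt_R_in_row_seg:
  assumes "board V E"
  shows "tilt E R p \<in> row_seg E p"
proof -
  have "\<exists>!q. q \<in> row_seg E p \<and> (\<forall>q'\<in>row_seg E p. fst q' \<le> fst q)"
    by (rule ex1_key_greatest[OF finite_row_seg[OF assms] _ inj_on_fst_row_seg[OF assms]])
      (use row_seg_self in blast)
  from theI'[OF this] show ?thesis
    unfolding tilt_def by auto
qed

lemma tilt_U:
  assumes "board V E"
  shows "tilt E U p \<in> col_seg E p" "q \<in> col_seg E p \<Longrightarrow> snd q \<le> snd (tilt E U p)"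
proof -
  have "\<exists>!q. q \<in> col_seg E p \<and> (\<forall>q'\<in>col_seg E p. snd q' \<le> snd q)"
    by (rule ex1_key_greatest[OF finite_col_seg[OF assms] _ inj_on_snd_col_seg[OF assms]])
      (use col_seg_self in blast)
  from theI'[OF this] show "tilt E U p \<in> col_seg E p"
    and "q \<in> col_seg E p \<Longrightarrow> snd q \<le> snd (tilt E U p)"
    unfolding tilt_def by auto
qed

lemma tilt_D_in_col_seg:
  assumes "board V E"
  shows "tilt E D p \<in> col_seg E p"
proof -
  have "\<exists>!q. q \<in> col_seg E p \<and> (\<forall>q'\<in>col_seg E p. snd q \<le> snd q')"
    by (rule ex1_key_least[OF finite_col_seg[OF assms] _ inj_on_snd_col_seg[OF assms]])
      (use col_seg_self in blast)
  from theI'[OF this] show ?thesis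
    unfolding tilt_def by auto
qed

lemma tilt_in_board:
  assumes "board V E" "p \<in> V"
  shows "tilt E d p \<in> V"
proof -
  have "tilt E d p \<in> row_seg E p \<union> col_seg E p"
    using assms(1) tilt_L(1) tilt_R_in_row_seg tilt_U(1) tilt_D_in_col_seg by (cases d) auto
  then show ?thesis
    using row_seg_memD[OF assms(1)] col_seg_memD[OF assms(1)] assms(2) by (metis UnE)
qed

lemma row_seg_left_bound:
  assumes "board V E" "\<not> joined E p (fst p - 1, snd p)" "q \<in> row_seg E p"
  shows "fst p \<le> fst q"
proof -
  have "(p, q) \<in> (hor_rel E)\<^sup>*"
    using assms(3) by (simp add: row_seg_def)
  then show ?thesis
  proof induction
    case (step q q')
    show ?case
    proof (rule ccontr)
      assume "\<not> fst p \<le> fst q'"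
      with step hor_rel_step[OF assms(1) step.hyps(2)] row_seg_memD[OF assms(1)]
      have "q = p" "q' = (fst p - 1, snd p)"
        by (auto simp: row_seg_def prod_eq_iff)
      with step.hyps(2) assms(2) show False
        by (simp add: hor_rel_def)
    qed
  qed simp
qed

lemma col_seg_top_bound:
  assumes "board V E" "\<not> joined E p (fst p, snd p + 1)" "q \<in> col_seg E p"
  shows "snd q \<le> snd p"
proof -
  have "(p, q) \<in> (ver_rel E)\<^sup>*"
    using assms(3) by (simp add: col_seg_def)
  then show ?thesis
  proof induction
    case (step q q')
    show ?case
    proof (rule ccontr)
      assume "\<not> snd q' \<le> snd p"
      with step ver_rel_step[OF assms(1) step.hyps(2)] col_seg_memD[OF assms(1)]
      have "q = p" "q' = (fst p, snd p + 1)"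
        by (auto simp: col_seg_def prod_eq_iff)
      with step.hyps(2) assms(2) show False
        by (simp add: ver_rel_def)
    qed
  qed simp
qed

lemma tilt_L_eq_self:
  assumes "board V E" "\<not> joined E p (fst p - 1, snd p)"
  shows "tilt E L p = p"
proof -
  have "fst (tilt E L p) = fst p"
    using tilt_L[OF assms(1)] row_seg_left_bound[OF assms] row_seg_self by (meson antisym)
  then show ?thesis
    using inj_onD[OF inj_on_fst_row_seg[OF assms(1)]] tilt_L(1)[OF assms(1)] row_seg_self by blast
qed

lemma tilt_U_eq_self:
  assumes "board V E" "\<not> joined E p (fst p, snd p + 1)"
  shows "tilt E U p = p"
proof -
  have "snd (tilt E U p) = snd p"
    using tilt_U[OF assms(1)] col_seg_top_bound[OF assms] col_seg_self by (meson antisym)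
  then show ?thesis
    using inj_onD[OF inj_on_snd_col_seg[OF assms(1)]] tilt_U(1)[OF assms(1)] col_seg_self by blast
qed

lemma tilt_U_topmost:
  assumes "board V E"
  shows "\<not> joined E (tilt E U p) (fst (tilt E U p), snd (tilt E U p) + 1)"
proof
  let ?u = "tilt E U p"
  assume "joined E ?u (fst ?u, snd ?u + 1)"
  then have "(fst ?u, snd ?u + 1) \<in> col_seg E p"
    using col_seg_joined col_seg_eq[OF tilt_U(1)[OF assms]] by fastforce
  from tilt_U(2)[OF assms this] show False
    by simp
qed

lemma reflex_corner_above_edge:
  assumes "joined E (x, y) (x + 1, y)"
    and "joined E (x, y) (x, y + 1) \<or> joined E (x + 1, y) (x + 1, y + 1)"
    and "\<not> (joined E (x, y) (x, y + 1) \<and> joined E (x + 1, y) (x + 1, y + 1) \<and>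
           joined E (x, y + 1) (x + 1, y + 1))"
  shows "reflex_corner E (x + 1, y + 1)"
  \<comment> \<open>The 270 degree angle is formed by (x, y), (x + 1, y), (x + 1, y + 1) in the first case
     and by (x, y + 1), (x, y), (x + 1, y) in the second.\<close>
proof (cases "joined E (x + 1, y) (x + 1, y + 1)")
  case True
  then show ?thesis
    unfolding reflex_corner_def
    by (intro exI[of _ 2]) (use assms in \<open>auto simp: quadrants_def Let_def joined_sym\<close>)
next
  case False
  then show ?thesis
    unfolding reflex_corner_def
    by (intro exI[of _ 1]) (use assms in \<open>auto simp: quadrants_def Let_def joined_sym\<close>)
qed

definition anchor :: "pixel set set \<Rightarrow> pixel \<Rightarrow> pixel" where
  "anchor E p = tilt E L (tilt E U p)"

lemma anchor_col_seg_eq: "q \<in> col_seg E p \<Longrightarrow> anchor E q = anchor E p"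
  by (simp add: anchor_def tilt_U_col_seg_eq)

locale board_with_sinks =
  fixes V :: "pixel set" and E :: "pixel set set" and S :: "pixel set"
  assumes board: "board V E" and sinks_in_board: "S \<subseteq> V"
begin

abbreviation linked :: "(pixel \<times> pixel) set" where
  "linked \<equiv> (large_tilt_graph V E S \<union> (large_tilt_graph V E S)\<inverse>)\<^sup>*"

lemma finite_board: "finite V"
  using board by (simp add: board_def)

lemma linked_sym: "(p, q) \<in> linked \<Longrightarrow> (q, p) \<in> linked"
  by (metis sym_Un_converse sym_rtrancl symD)

lemma full_tilt_graph_reach_in_board:
  "(c, p) \<in> (full_tilt_graph V E)\<^sup>* \<Longrightarrow> c \<in> V \<Longrightarrow> p \<in> V"
  by (induction rule: rtrancl_induct)
    (auto simp: full_tilt_graph_def intro: tilt_in_board[OF board])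

lemma base_in_board: "p \<in> large_tilt_base V E S \<Longrightarrow> p \<in> V"
  unfolding large_tilt_base_def corner_pixel_def incident_pixels_def
  using full_tilt_graph_reach_in_board sinks_in_board tilt_in_board[OF board] by blast

lemma vertex_in_board: "p \<in> large_tilt_vertices V E S \<Longrightarrow> p \<in> V"
  unfolding large_tilt_vertices_def using base_in_board by blast

lemma base_in_vertices: "p \<in> large_tilt_base V E S \<Longrightarrow> p \<in> large_tilt_vertices V E S"
  unfolding large_tilt_vertices_def by blast

lemma corner_in_base: "corner_pixel V E c \<Longrightarrow> c \<in> large_tilt_base V E S"
  unfolding large_tilt_base_def by blast

lemma reflex_tilt_in_base:
  "reflex_corner E v \<Longrightarrow> q \<in> incident_pixels V v \<Longrightarrow> tilt E d q \<in> large_tilt_base V E S"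
  unfolding large_tilt_base_def by blast

lemma in_vertices_if_tilts_in_base:
  assumes "q \<in> V" "\<And>d. tilt E d q \<in> large_tilt_base V E S"
  shows "q \<in> large_tilt_vertices V E S"
proof -
  have "q \<in> row_seg E (tilt E L q)" "q \<in> col_seg E (tilt E U q)"
    using row_seg_sym[OF tilt_L(1)[OF board]] col_seg_sym[OF tilt_U(1)[OF board]] .
  with assms show ?thesis
    unfolding large_tilt_vertices_def by blast
qed

lemma linked_tilt:
  assumes "p \<in> large_tilt_vertices V E S" "tilt E d p \<in> large_tilt_vertices V E S"
  shows "(p, tilt E d p) \<in> linked"
proof (cases "tilt E d p = p")
  case False
  with assms vertex_in_board have "(p, tilt E d p) \<in> large_tilt_graph V E S"
    unfolding large_tilt_graph_def full_tilt_graph_def by blast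
  then show ?thesis
    by blast
qed simp

lemma tilt_L_in_base_if_topmost:
  assumes "p \<in> V" "\<not> joined E p (fst p, snd p + 1)"
  shows "tilt E L p \<in> large_tilt_base V E S"
  using assms
proof (induction p rule: measure_induct_rule[where f = "\<lambda>p. nat (fst p - Min (fst ` V))"])
  case (less p)
  obtain x y where p: "p = (x, y)"
    by fastforce
  show ?case
  proof (cases "joined E (x - 1, y) (x, y)")
    case False
    then have "tilt E L p = p" "tilt E U p = p"
      using tilt_L_eq_self[OF board] tilt_U_eq_self[OF board] less.prems(2)
      by (auto simp: p joined_sym)
    with less.prems(1) have "corner_pixel V E p"
      by (auto simp: corner_pixel_def)
    with \<open>tilt E L p = p\<close> show ?thesis
      using corner_in_base by simp
  next
    case left: True
    then have left_in_row: "(x - 1, y) \<in> V" "(x - 1, y) \<in> row_seg E p"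
      using joined_in_board[OF board] row_seg_joined joined_sym by (auto simp: p)
    show ?thesis
    proof (cases "joined E (x - 1, y) (x - 1, y + 1)")
      case True
      with left less.prems(2) have "reflex_corner E (x, y + 1)"
        using reflex_corner_above_edge[of E "x - 1" y] by (simp add: p)
      moreover have "p \<in> incident_pixels V (x, y + 1)"
        using less.prems(1) by (simp add: p incident_pixels_def quadrants_def)
      ultimately show ?thesis
        by (rule reflex_tilt_in_base)
    next
      case False
      have "Min (fst ` V) \<le> x - 1"
        using Min_le[OF finite_imageI[OF finite_board] imageI[OF left_in_row(1)], of fst]
        by simp
      with False left_in_row(1) have "tilt E L (x - 1, y) \<in> large_tilt_base V E S"
        using less.IH[of "(x - 1, y)"] by (simp add: p)
      then show ?thesis
        using tilt_L_row_seg_eq[OF left_in_row(2)] by simp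
    qed
  qed
qed

lemma anchor_in_base: "p \<in> V \<Longrightarrow> anchor E p \<in> large_tilt_base V E S"
  unfolding anchor_def
  by (rule tilt_L_in_base_if_topmost[OF tilt_in_board[OF board] tilt_U_topmost[OF board]])

lemma tilt_U_in_vertices:
  assumes "w \<in> large_tilt_vertices V E S"
  shows "tilt E U w \<in> large_tilt_vertices V E S"
proof -
  obtain b where b: "b \<in> large_tilt_base V E S" "w \<in> col_seg E b"
    using assms col_seg_self unfolding large_tilt_vertices_def by blast
  have "tilt E U w \<in> col_seg E b"
    using tilt_U(1)[OF board] col_seg_eq[OF b(2)] by blast
  moreover have "tilt E U w \<in> row_seg E (anchor E w)"
    unfolding anchor_def by (rule row_seg_sym[OF tilt_L(1)[OF board]])
  moreover have "tilt E U w \<in> V" "anchor E w \<in> large_tilt_base V E S"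
    using vertex_in_board[OF assms] tilt_in_board[OF board] anchor_in_base by auto
  ultimately show ?thesis
    using b(1) unfolding large_tilt_vertices_def by blast
qed

lemma linked_anchor:
  assumes "w \<in> large_tilt_vertices V E S"
  shows "(w, anchor E w) \<in> linked"
proof -
  have "(w, tilt E U w) \<in> linked"
    by (rule linked_tilt[OF assms tilt_U_in_vertices[OF assms]])
  moreover have "(tilt E U w, anchor E w) \<in> linked"
    using linked_tilt[OF tilt_U_in_vertices[OF assms]] base_in_vertices
      anchor_in_base[OF vertex_in_board[OF assms]]
    by (simp add: anchor_def)
  ultimately show ?thesis
    by (rule rtrancl_trans)
qed

lemma linked_anchors_at_reflex_corner:
  assumes "reflex_corner E v" "p \<in> incident_pixels V v" "q \<in> incident_pixels V v"
    and "q \<in> row_seg E p"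
  shows "(anchor E p, anchor E q) \<in> linked"
proof -
  have "(anchor E r, tilt E L r) \<in> linked" if r: "r \<in> incident_pixels V v" for r
  proof -
    have tilts: "tilt E d r \<in> large_tilt_base V E S" for d
      using reflex_tilt_in_base[OF assms(1) r] .
    then have "r \<in> large_tilt_vertices V E S"
      using in_vertices_if_tilts_in_base r by (simp add: incident_pixels_def)
    then have "(r, anchor E r) \<in> linked" "(r, tilt E L r) \<in> linked"
      using linked_anchor linked_tilt base_in_vertices[OF tilts] by auto
    then show ?thesis
      by (meson linked_sym rtrancl_trans)
  qed
  with assms(2,3) show ?thesis
    using tilt_L_row_seg_eq[OF assms(4)] by (metis linked_sym rtrancl_trans)
qed

lemma linked_anchors_hor_edge:
  assumes "joined E (x, y) (x + 1, y)"
  shows "(anchor E (x, y), anchor E (x + 1, y)) \<in> linked"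
  using assms
proof (induction y rule: measure_induct_rule[where f = "\<lambda>y. nat (Max (snd ` V) - y)"])
  case (less y)
  have incident: "(x, y) \<in> incident_pixels V (x + 1, y + 1)"
    "(x + 1, y) \<in> incident_pixels V (x + 1, y + 1)"
    using joined_in_board[OF board less.prems] by (simp_all add: incident_pixels_def quadrants_def)
  have row: "(x + 1, y) \<in> row_seg E (x, y)"
    using row_seg_joined[OF less.prems] by simp
  consider (topmost) "\<not> joined E (x, y) (x, y + 1)" "\<not> joined E (x + 1, y) (x + 1, y + 1)"
    | (lift) "joined E (x, y) (x, y + 1)" "joined E (x + 1, y) (x + 1, y + 1)"
        "joined E (x, y + 1) (x + 1, y + 1)"
    | (reflex) "reflex_corner E (x + 1, y + 1)"
    using reflex_corner_above_edge[OF less.prems] by blast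
  then show ?case
  proof cases
    case topmost
    then have "anchor E (x, y) = anchor E (x + 1, y)"
      using tilt_U_eq_self[OF board] tilt_L_row_seg_eq[OF row] by (simp add: anchor_def)
    then show ?thesis
      by simp
  next
    case lift
    have above: "(x, y + 1) \<in> V"
      using joined_in_board(2)[OF board lift(1)] .
    have "y + 1 \<le> Max (snd ` V)"
      using Max_ge[OF finite_imageI[OF finite_board] imageI[OF above], of snd] by simp
    with lift(3) have "(anchor E (x, y + 1), anchor E (x + 1, y + 1)) \<in> linked"
      using less.IH[of "y + 1"] by simp
    moreover have "anchor E (x, y + 1) = anchor E (x, y)"
      and "anchor E (x + 1, y + 1) = anchor E (x + 1, y)"
      using lift(1,2) by (simp_all add: anchor_col_seg_eq col_seg_joined)
    ultimately show ?thesis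
      by simp
  next
    case reflex
    then show ?thesis
      using linked_anchors_at_reflex_corner incident row by blast
  qed
qed

lemma linked_anchors_if_joined:
  assumes "joined E p q"
  shows "(anchor E p, anchor E q) \<in> linked"
proof -
  have "fst p = fst q \<or> q = (fst p + 1, snd p) \<or> p = (fst q + 1, snd q)"
    using joined_in_board(3)[OF board assms] unfolding grid_adj_def prod_eq_iff
    by (simp add: abs_if split: if_splits; linarith)
  then consider "fst p = fst q" | "q = (fst p + 1, snd p)" | "p = (fst q + 1, snd q)"
    by blast
  then show ?thesis
  proof cases
    case 1
    then show ?thesis
      using anchor_col_seg_eq[OF col_seg_joined[OF assms]] by simp
  next
    case 2
    then show ?thesis
      using linked_anchors_hor_edge[of "fst p" "snd p"] assms by simp
  next
    case 3
    then show ?thesis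
      using linked_anchors_hor_edge[of "fst q" "snd q"] assms joined_sym linked_sym by simp
  qed
qed

lemma linked_anchors:
  "(p, q) \<in> {(a, b). joined E a b}\<^sup>* \<Longrightarrow> (anchor E p, anchor E q) \<in> linked"
  by (induction rule: rtrancl_induct) (auto intro: rtrancl_trans linked_anchors_if_joined)

end

theorem mainTheorem5:
  fixes V :: "pixel set" and E :: "pixel set set" and S :: "pixel set"
  assumes "connected_board V E"
    and "S \<subseteq> V"
  shows "weakly_connected (large_tilt_vertices V E S) (large_tilt_graph V E S)"
proof -
  interpret board_with_sinks V E S
    using assms by (simp add: board_with_sinks_def connected_board_def)
  show ?thesis
    unfolding weakly_connected_def
  proof (intro ballI)
    fix p q
    assume "p \<in> large_tilt_vertices V E S" "q \<in> large_tilt_vertices V E S"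
    moreover from this have "(p, q) \<in> {(a, b). joined E a b}\<^sup>*"
      using assms(1) vertex_in_board by (simp add: connected_board_def)
    ultimately have "(p, anchor E p) \<in> linked" "(anchor E p, anchor E q) \<in> linked"
      "(anchor E q, q) \<in> linked"
      using linked_anchor linked_anchors linked_sym by blast+
    then show "(p, q) \<in> linked"
      by (meson rtrancl_trans)
  qed
qed

end
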